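(* Under the standing setting and assumptions (A1)–(A3) described in the context, assume $\mathcal A$ is convex and $\mathrm{int}(\mathcal A^\infty)\cap\mathcal M\neq\emptyset$. Then for every $\varepsilon>0$ the map $\mathcal R_\varepsilon$ is lower semicontinuous at every point of $\mathcal X$.
   Context: Let $\mathcal X$ be a Hausdorff, first countable, locally convex topological vector space over $\mathbb R$, partially ordered by a partial order $\geq$ with positive cone $\mathcal X_+=\{X\in\mathcal X: X\geq 0\}$. Let $\mathcal M\subset\mathcal X$ be a vector subspace with $1<\dim\mathcal M<\infty$, carrying the relative topology, and let $\pi:\mathcal M\to\mathbb R$ be linear. Standing assumptions: (A1) there is $U\in\mathcal M\cap\mathcal X_+$ with $\pi(U)=1$; (A2) $\mathcal A\subsetneq\mathcal X$ is closed, contains $0$, and satisfies $\mathcal A+\mathcal X_+\subset\mathcal A$; (A3) the map $\rho(X)=\inf\{\pi(Z): Z\in\mathcal M,\ X+Z\in\mathcal A\}$ is finitely valued and continuous on $\mathcal X$. For $\varepsilon>0$, $\mathcal R_\varepsilon(X)=\{Z\in\mathcal M: X+Z\in\mathcal A,\ \pi(Z)<\rho(X)+\varepsilon\}$. The asymptotic cone is $\mathcal A^\infty=\bigcap_{\delta>0}\mathrm{cl}\{\lambda X:\lambda\in[0,\delta],X\in\mathcal A\}$; $\mathrm{int}$ denotes interior in $\mathcal X$. A set-valued map $\mathcal S:\mathcal X\rightrightarrows\mathcal M$ is lower semicontinuous at $X$ if for every open $\mathcal U\subset\mathcal M$ with $\mathcal S(X)\cap\mathcal U\neq\emptyset$ there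 is an open neighborhood $\mathcal U_X$ of $X$ with $\mathcal S(Y)\cap\mathcal U\neq\emptyset$ for all $Y\in\mathcal U_X$. *)

theory Defs
  imports "HOL-Analysis.Analysis"
begin

definition tvs :: "'a::{real_vector,topological_space} itself \<Rightarrow> bool" where
  "tvs _ \<longleftrightarrow>
     continuous_on UNIV (\<lambda>p::'a \<times> 'a. fst p + snd p) \<and>
     continuous_on UNIV (\<lambda>p::real \<times> 'a. fst p *\<^sub>R snd p)"

definition locally_convex :: "'a::{real_vector,topological_space} itself \<Rightarrow> bool" where
  "locally_convex _ \<longleftrightarrow>
     (\<forall>U::'a set. open U \<and> 0 \<in> U \<longrightarrow> (\<exists>V. open V \<and> convex V \<and> 0 \<in> V \<and> V \<subseteq> U))"

definition positive_cone :: "'a::real_vector set \<Rightarrow> bool" where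
  "positive_cone P \<longleftrightarrow> 0 \<in> P \<and> (\<forall>x\<in>P. \<forall>y\<in>P. x + y \<in> P) \<and>
     (\<forall>c::real. \<forall>x\<in>P. c \<ge> 0 \<longrightarrow> c *\<^sub>R x \<in> P) \<and>
     (\<forall>x. x \<in> P \<and> - x \<in> P \<longrightarrow> x = 0)"

definition linear_on :: "'a::real_vector set \<Rightarrow> ('a \<Rightarrow> real) \<Rightarrow> bool" where
  "linear_on M f \<longleftrightarrow> (\<forall>x\<in>M. \<forall>y\<in>M. f (x + y) = f x + f y) \<and>
     (\<forall>c. \<forall>x\<in>M. f (c *\<^sub>R x) = c * f x)"

definition rho :: "'a::real_vector set \<Rightarrow> ('a \<Rightarrow> real) \<Rightarrow> 'a set \<Rightarrow> 'a \<Rightarrow> real" where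
  "rho M \<pi> A X = Inf {\<pi> Z | Z. Z \<in> M \<and> X + Z \<in> A}"

definition rho_finite :: "'a::real_vector set \<Rightarrow> ('a \<Rightarrow> real) \<Rightarrow> 'a set \<Rightarrow> bool" where
  "rho_finite M \<pi> A \<longleftrightarrow> (\<forall>X. {\<pi> Z | Z. Z \<in> M \<and> X + Z \<in> A} \<noteq> {} \<and>
                                 bdd_below {\<pi> Z | Z. Z \<in> M \<and> X + Z \<in> A})"

definition R_eps :: "'a::real_vector set \<Rightarrow> ('a \<Rightarrow> real) \<Rightarrow> 'a set \<Rightarrow> real \<Rightarrow> 'a \<Rightarrow> 'a set" where
  "R_eps M \<pi> A \<epsilon> X = {Z \<in> M. X + Z \<in> A \<and> \<pi> Z < rho M \<pi> A X + \<epsilon>}"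

definition asymp_cone :: "'a::{real_vector,topological_space} set \<Rightarrow> 'a set" where
  "asymp_cone A = (\<Inter>\<delta>\<in>{\<delta>::real. \<delta> > 0}. closure {l *\<^sub>R X | l X. l \<in> {0..\<delta>} \<and> X \<in> A})"

definition lsc_at :: "'b set \<Rightarrow> ('a::topological_space \<Rightarrow> 'b::topological_space set) \<Rightarrow> 'a \<Rightarrow> bool" where
  "lsc_at M S X \<longleftrightarrow> (\<forall>U. openin (top_of_set M) U \<and> S X \<inter> U \<noteq> {} \<longrightarrow>
      (\<exists>V. open V \<and> X \<in> V \<and> (\<forall>Y\<in>V. S Y \<inter> U \<noteq> {})))"

end

theory Submission
  imports Defs
begin

text \<open>Perturb an \<open>\<epsilon>\<close>-optimal payoff \<open>Z\<close> in the direction of a payoff \<open>W \<in> M\<close> lying in the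
  interior of the asymptotic cone. For a small step \<open>l > 0\<close> the perturbed payoff \<open>Z + l W\<close> stays
  in the given open set and remains \<open>\<epsilon>\<close>-optimal with some slack. On the other hand, for \<open>Y\<close> near
  \<open>X\<close> the direction \<open>W + (Y - X)/l\<close> still lies in the asymptotic cone, which for a closed convex
  set is contained in the recession cone; hence \<open>Y + Z + l W = (X + Z) + l (W + (Y - X)/l) \<in> A\<close>.
  Continuity of \<open>\<rho>\<close> preserves the slack, so \<open>Z + l W \<in> R\<^sub>\<epsilon>(Y)\<close> for all \<open>Y\<close> near \<open>X\<close>.\<close>

lemma continuous_on_add_tvs:
  fixes f g :: "'b::topological_space \<Rightarrow> 'a::{real_vector,topological_space}"
  assumes "tvs TYPE('a)" "continuous_on S f" "continuous_on S g"
  shows "continuous_on S (\<lambda>x. f x + g x)"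
proof -
  have "continuous_on UNIV (\<lambda>p::'a \<times> 'a. fst p + snd p)"
    using assms(1) unfolding tvs_def by blast
  then have "continuous_on S ((\<lambda>p::'a \<times> 'a. fst p + snd p) \<circ> (\<lambda>x. (f x, g x)))"
    by (intro continuous_on_compose continuous_on_Pair assms(2,3)) (rule continuous_on_subset, auto)
  then show ?thesis by (simp add: o_def)
qed

lemma continuous_on_scaleR_tvs:
  fixes f :: "'b::topological_space \<Rightarrow> real" and g :: "'b \<Rightarrow> 'a::{real_vector,topological_space}"
  assumes "tvs TYPE('a)" "continuous_on S f" "continuous_on S g"
  shows "continuous_on S (\<lambda>x. f x *\<^sub>R g x)"
proof -
  have "continuous_on UNIV (\<lambda>p::real \<times> 'a. fst p *\<^sub>R snd p)"
    using assms(1) unfolding tvs_def by blast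
  then have "continuous_on S ((\<lambda>p::real \<times> 'a. fst p *\<^sub>R snd p) \<circ> (\<lambda>x. (f x, g x)))"
    by (intro continuous_on_compose continuous_on_Pair assms(2,3)) (rule continuous_on_subset, auto)
  then show ?thesis by (simp add: o_def)
qed

lemma convex_closed_add_asymp_cone:
  fixes A :: "'a::{real_vector,topological_space} set"
  assumes tvs: "tvs TYPE('a)" and "closed A" and "convex A"
    and a: "a \<in> A" and d: "d \<in> asymp_cone A" and "t \<ge> 0"
  shows "a + t *\<^sub>R d \<in> A"
proof (rule ccontr)
  assume out: "a + t *\<^sub>R d \<notin> A"
  with a \<open>t \<ge> 0\<close> have "t > 0" by (cases "t = 0") auto
  \<comment> \<open>\<open>f (l, l X) = (1 - l t) a + l t X\<close> is a convex combination, and \<open>f (0, d) = a + t d\<close>.\<close>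
  define f where "f = (\<lambda>p::real \<times> 'a. a + t *\<^sub>R snd p + (- (fst p * t)) *\<^sub>R a)"
  have "continuous_on UNIV f"
    unfolding f_def
    by (intro continuous_on_add_tvs[OF tvs] continuous_on_scaleR_tvs[OF tvs] continuous_on_const
        continuous_on_snd continuous_on_minus continuous_on_mult continuous_on_fst continuous_on_id)
  then have "open (f -` (- A))"
    using \<open>closed A\<close> continuous_on_open_vimage[of UNIV f] by (simp add: open_Compl)
  moreover have "(0, d) \<in> f -` (- A)" using out by (simp add: f_def)
  ultimately obtain S B where SB: "open S" "open B" "0 \<in> S" "d \<in> B" "S \<times> B \<subseteq> f -` (- A)"
    by (metis open_prod_elim mem_Sigma_iff)
  obtain e where e: "e > 0" "ball 0 e \<subseteq> S" using SB open_contains_ball by force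
  define \<delta> where "\<delta> = min (e/2) (1/t)"
  have "\<delta> > 0" using e \<open>t > 0\<close> by (simp add: \<delta>_def)
  then have "d \<in> closure {l *\<^sub>R X | l X. l \<in> {0..\<delta>} \<and> X \<in> A}"
    using d unfolding asymp_cone_def by blast
  then have "B \<inter> {l *\<^sub>R X | l X. l \<in> {0..\<delta>} \<and> X \<in> A} \<noteq> {}"
    using SB open_Int_closure_eq_empty[of B] by blast
  then obtain l X where lX: "0 \<le> l" "l \<le> \<delta>" "X \<in> A" "l *\<^sub>R X \<in> B" by auto
  have "l \<in> ball 0 e" using lX e by (auto simp: \<delta>_def dist_real_def)
  then have "f (l, l *\<^sub>R X) \<notin> A" using SB e lX by blast
  moreover have "0 \<le> l * t" "l * t \<le> 1"
    using lX \<open>t > 0\<close> by (simp_all add: \<delta>_def pos_le_divide_eq)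
  then have "(1 - l * t) *\<^sub>R a + (l * t) *\<^sub>R X \<in> A"
    using convexD[OF \<open>convex A\<close> a lX(3)] by simp
  moreover have "f (l, l *\<^sub>R X) = (1 - l * t) *\<^sub>R a + (l * t) *\<^sub>R X"
    by (simp add: f_def algebra_simps)
  ultimately show False by simp
qed

lemma eventually_add_mem_interior_asymp_cone:
  fixes A :: "'a::{real_vector,topological_space} set"
  assumes tvs: "tvs TYPE('a)" and "closed A" and "convex A"
    and XZ: "X + Z \<in> A" and W: "W \<in> interior (asymp_cone A)" and "l > 0"
  shows "eventually (\<lambda>Y. Y + (Z + l *\<^sub>R W) \<in> A) (nhds X)"
proof -
  define h where "h = (\<lambda>Y. W + (1/l) *\<^sub>R Y + (- (1/l)) *\<^sub>R X)"
  have "continuous_on UNIV h" unfolding h_def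
    by (intro continuous_on_add_tvs[OF tvs] continuous_on_scaleR_tvs[OF tvs]
        continuous_on_const continuous_on_id)
  then have "open (h -` interior (asymp_cone A))"
    using continuous_on_open_vimage[of UNIV h] by simp
  moreover have "X \<in> h -` interior (asymp_cone A)" using W by (simp add: h_def)
  moreover have "Y + (Z + l *\<^sub>R W) \<in> A" if "h Y \<in> interior (asymp_cone A)" for Y
  proof -
    have "(X + Z) + l *\<^sub>R h Y \<in> A"
      by (rule convex_closed_add_asymp_cone[OF tvs \<open>closed A\<close> \<open>convex A\<close> XZ])
        (use that interior_subset \<open>l > 0\<close> in auto)
    moreover have "(X + Z) + l *\<^sub>R h Y = Y + (Z + l *\<^sub>R W)"
      using \<open>l > 0\<close> by (simp add: h_def algebra_simps)
    ultimately show ?thesis by simp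
  qed
  ultimately show ?thesis unfolding eventually_nhds by blast
qed

lemma ex_pos_step_add_scaleR_mem_open:
  fixes W :: "'a::{real_vector,topological_space}" and c s :: real
  assumes tvs: "tvs TYPE('a)" and "open S" and "Z \<in> S" and "s > 0"
  shows "\<exists>l>0. Z + l *\<^sub>R W \<in> S \<and> l * c < s"
proof -
  have "continuous_on UNIV (\<lambda>l::real. Z + l *\<^sub>R W)"
    by (intro continuous_on_add_tvs[OF tvs] continuous_on_scaleR_tvs[OF tvs]
        continuous_on_const continuous_on_id)
  then have "open ((\<lambda>l::real. Z + l *\<^sub>R W) -` S)"
    using \<open>open S\<close> continuous_on_open_vimage[of UNIV "\<lambda>l::real. Z + l *\<^sub>R W"] by simp
  then have "eventually (\<lambda>l. Z + l *\<^sub>R W \<in> S) (nhds 0)"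
    unfolding eventually_nhds using \<open>Z \<in> S\<close>
    by (intro exI[of _ "(\<lambda>l::real. Z + l *\<^sub>R W) -` S"]) simp
  then have "eventually (\<lambda>l. Z + l *\<^sub>R W \<in> S) (at_right 0)"
    by (rule filter_leD[OF at_within_le_nhds])
  moreover have "((\<lambda>l. l * c) \<longlongrightarrow> 0) (at_right 0)"
    by (auto intro!: tendsto_eq_intros)
  then have "eventually (\<lambda>l. l * c < s) (at_right 0)"
    using \<open>s > 0\<close> by (intro order_tendstoD)
  ultimately have "eventually (\<lambda>l. l > 0 \<and> Z + l *\<^sub>R W \<in> S \<and> l * c < s) (at_right 0)"
    by (intro eventually_conj eventually_at_right_less)
  then show ?thesis
    using eventually_happens'[OF trivial_limit_at_right_real] by blast
qed

theorem mainTheorem20: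
  fixes P :: "'a::{real_vector, t2_space, first_countable_topology} set"
    and M :: "'a set" and \<pi> :: "'a \<Rightarrow> real" and A :: "'a set"
  assumes tvs: "tvs TYPE('a)"
    and lc: "locally_convex TYPE('a)"
    and cone: "positive_cone P"
    and M_sub: "subspace M"
    and M_fin: "\<exists>B. finite B \<and> span B = M"
    and M_dim: "dim M > 1"
    and pi_lin: "linear_on M \<pi>"
    and A1: "\<exists>U\<in>M \<inter> P. \<pi> U = 1"
    and A2: "closed A" "0 \<in> A" "A \<noteq> UNIV" "\<forall>X\<in>A. \<forall>Y\<in>P. X + Y \<in> A"
    and A3: "rho_finite M \<pi> A" "continuous_on UNIV (rho M \<pi> A)"
    and conv: "convex A"
    and int: "interior (asymp_cone A) \<inter> M \<noteq> {}"
  shows "\<forall>\<epsilon>>0. \<forall>X. lsc_at M (R_eps M \<pi> A \<epsilon>) X"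
proof (intro allI impI)
  fix \<epsilon> :: real and X :: 'a
  assume "\<epsilon> > 0"
  obtain W where W: "W \<in> interior (asymp_cone A)" "W \<in> M" using int by blast
  show "lsc_at M (R_eps M \<pi> A \<epsilon>) X"
    unfolding lsc_at_def
  proof (intro allI impI, elim conjE)
    fix U assume "openin (top_of_set M) U" and "R_eps M \<pi> A \<epsilon> X \<inter> U \<noteq> {}"
    then obtain Z S where Z: "Z \<in> M" "X + Z \<in> A" "\<pi> Z < rho M \<pi> A X + \<epsilon>"
      and S: "open S" "Z \<in> S" "U = S \<inter> M"
      unfolding R_eps_def openin_open by blast
    have "rho M \<pi> A X + \<epsilon> - \<pi> Z > 0" using Z(3) by simp
    then obtain l where l: "l > 0" "Z + l *\<^sub>R W \<in> S" "l * \<pi> W < rho M \<pi> A X + \<epsilon> - \<pi> Z"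
      using ex_pos_step_add_scaleR_mem_open[OF tvs S(1,2)] by blast
    define Z' where "Z' = Z + l *\<^sub>R W"
    have "Z' \<in> U" using Z W l S M_sub by (simp add: Z'_def subspace_add subspace_scale)
    have "\<pi> Z' = \<pi> Z + l * \<pi> W"
      using pi_lin Z W M_sub unfolding linear_on_def Z'_def by (simp add: subspace_scale)
    then have "open {Y. \<pi> Z' - \<epsilon> < rho M \<pi> A Y}" "X \<in> {Y. \<pi> Z' - \<epsilon> < rho M \<pi> A Y}"
      using l(3) by (auto intro!: open_Collect_less continuous_on_const A3(2))
    then have "eventually (\<lambda>Y. \<pi> Z' < rho M \<pi> A Y + \<epsilon>) (nhds X)"
      unfolding eventually_nhds by force
    moreover have "eventually (\<lambda>Y. Y + Z' \<in> A) (nhds X)"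
      unfolding Z'_def by (rule eventually_add_mem_interior_asymp_cone[OF tvs A2(1) conv Z(2) W(1) l(1)])
    ultimately have "eventually (\<lambda>Y. Z' \<in> R_eps M \<pi> A \<epsilon> Y \<inter> U) (nhds X)"
      by eventually_elim (use \<open>Z' \<in> U\<close> S(3) in \<open>simp add: R_eps_def\<close>)
    then show "\<exists>V. open V \<and> X \<in> V \<and> (\<forall>Y\<in>V. R_eps M \<pi> A \<epsilon> Y \<inter> U \<noteq> {})"
      unfolding eventually_nhds by blast
  qed
qed

end
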